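(* The set of $(w,x,y,z)\in\mathbb{R}^4$ satisfying \[ w+x+y+z = 3+wy \qquad\text{and}\qquad wy = zx \] is a smooth surface with two connected components, each diffeomorphic to a disc. One of the components, $X$, contains the point $(3,3,3,3)$, and it is distinguished from the other component by the inequalities $x>1$ and $z>1$ (equivalently, $y>1$ and $w>1$). *)

theory Defs
  imports "HOL-Analysis.Analysis"
begin

fun Ck_on :: "nat \<Rightarrow> 'a::real_normed_vector set \<Rightarrow> ('a \<Rightarrow> 'b::real_normed_vector) \<Rightarrow> bool" where
  "Ck_on 0 S f = continuous_on S f"
| "Ck_on (Suc n) S f =
     (\<exists>f'. (\<forall>x\<in>S. (f has_derivative f' x) (at x)) \<and> (\<forall>v. Ck_on n S (\<lambda>x. f' x v)))"

definition smooth_on :: "'a::real_normed_vector set \<Rightarrow> ('a \<Rightarrow> 'b::real_normed_vector) \<Rightarrow> bool" where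
  "smooth_on S f \<longleftrightarrow> open S \<and> (\<forall>n. Ck_on n S f)"

text \<open>Milnor's convention: a map on an arbitrary subset X is smooth if near every
  point of X it extends to a smooth map on an open set.\<close>

definition smooth_map :: "'a::real_normed_vector set \<Rightarrow> ('a \<Rightarrow> 'b::real_normed_vector) \<Rightarrow> bool" where
  "smooth_map X f \<longleftrightarrow>
     (\<forall>x\<in>X. \<exists>U F. open U \<and> x \<in> U \<and> smooth_on U F \<and> (\<forall>y\<in>U \<inter> X. F y = f y))"

definition diffeo_betw :: "('a::real_normed_vector \<Rightarrow> 'b::real_normed_vector) \<Rightarrow> 'a set \<Rightarrow> 'b set \<Rightarrow> bool" where
  "diffeo_betw f X Y \<longleftrightarrow>
     bij_betw f X Y \<and> smooth_map X f \<and>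
     (\<exists>g. smooth_map Y g \<and> (\<forall>x\<in>X. g (f x) = x) \<and> (\<forall>y\<in>Y. f (g y) = y))"

definition diffeomorphic_sets :: "'a::real_normed_vector set \<Rightarrow> 'b::real_normed_vector set \<Rightarrow> bool" where
  "diffeomorphic_sets X Y \<longleftrightarrow> (\<exists>f. diffeo_betw f X Y)"

definition smooth_surface :: "'a::real_normed_vector set \<Rightarrow> bool" where
  "smooth_surface M \<longleftrightarrow>
     (\<forall>p\<in>M. \<exists>W (U :: (real \<times> real) set).
        openin (top_of_set M) W \<and> p \<in> W \<and> open U \<and> diffeomorphic_sets U W)"

end

theory Submission
  imports Defs
begin

text \<open>
  After the shift \<open>(w, x, y, z) = (1 + a, 1 + c, 1 + b, 1 + d)\<close> the equations become
  \<open>a b = c + d\<close>, \<open>c d = a + b\<close>, which imply \<open>b (a c - 1) = a + c\<^sup>2\<close> and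
  \<open>d (a c - 1) = c + a\<^sup>2\<close>. So off the hyperbola \<open>a c = 1\<close> the surface is the graph of \<open>(b, d)\<close>
  over the \<open>(a, c)\<close>-plane, while over the hyperbola it only meets the point \<open>a = c = -1\<close>, with
  the whole line \<open>b + d = 1\<close> above it. Writing \<open>rho z = sqrt (4 + z\<^sup>2)\<close>, the hyperbola is
  \<open>\<bar>a + c\<bar> = rho (a - c)\<close>, and the surface falls apart into the relatively open pieces
  \<open>a + c > rho (a - c)\<close> (equivalently \<open>c, d > 0\<close>) and \<open>a + c < rho (a - c)\<close>.

  The first piece is a graph over a region that \<open>(a - c, a + c - rho (a - c))\<close> maps
  diffeomorphically onto the half-plane. The second has the global chart
  \<open>(t, v) \<mapsto> (a, c)\<close> with \<open>a - c = t v\<close> and \<open>a + c = rho (t v) (v kappa v - 1)\<close>, where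
  \<open>v \<mapsto> v kappa v\<close> maps the line onto \<open>(-\<infinity>, 2)\<close>; it blows the point \<open>(-1, -1)\<close> up into the
  line \<open>v = 0\<close>, and after cancelling a factor \<open>v\<close> the coordinates \<open>b\<close>, \<open>d\<close> are smooth in \<open>(t, v)\<close>.
  Both pieces are thus diffeomorphic to the plane, hence to the disc, and being connected,
  disjoint and open they are the two components.
\<close>

section \<open>Smooth functions\<close>

lemma Ck_on_SucI:
  assumes "\<And>x. x \<in> S \<Longrightarrow> (f has_derivative f' x) (at x)" and "\<And>v. Ck_on n S (\<lambda>x. f' x v)"
  shows "Ck_on (Suc n) S f"
  using assms by auto

lemma Ck_on_Suc_imp_Ck_on: "Ck_on (Suc n) S f \<Longrightarrow> Ck_on n S f"
proof (induction n arbitrary: f)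
  case 0
  then obtain f' where "\<And>x. x \<in> S \<Longrightarrow> (f has_derivative f' x) (at x)"
    by auto
  then show ?case
    by (auto intro!: continuous_at_imp_continuous_on has_derivative_continuous)
next
  case (Suc n)
  obtain f' where "\<And>x. x \<in> S \<Longrightarrow> (f has_derivative f' x) (at x)"
    and "\<And>v. Ck_on (Suc n) S (\<lambda>x. f' x v)"
    using Suc.prems by auto
  then show ?case using Suc.IH by (blast intro: Ck_on_SucI)
qed

lemma Ck_on_subset: "Ck_on n S f \<Longrightarrow> T \<subseteq> S \<Longrightarrow> Ck_on n T f"
proof (induction n arbitrary: f)
  case 0
  then show ?case by (auto intro: continuous_on_subset)
next
  case (Suc n)
  obtain f' where "\<And>x. x \<in> S \<Longrightarrow> (f has_derivative f' x) (at x)"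
    and "\<And>v. Ck_on n S (\<lambda>x. f' x v)"
    using Suc.prems(1) by auto
  then show ?case using Suc.IH Suc.prems(2) by (metis Ck_on_SucI subsetD)
qed

lemma Ck_on_const: "Ck_on n S (\<lambda>x. c)"
proof (induction n arbitrary: c)
  case (Suc n)
  show ?case by (rule Ck_on_SucI[where f' = "\<lambda>x h. 0"]) (simp_all add: Suc)
qed simp

lemma Ck_on_id: "Ck_on n S (\<lambda>x. x)"
proof (induction n)
  case (Suc n)
  show ?case by (rule Ck_on_SucI[where f' = "\<lambda>x h. h"]) (simp_all add: Ck_on_const)
qed simp

lemma Ck_on_bounded_linear:
  assumes "bounded_linear L"
  shows "Ck_on n S f \<Longrightarrow> Ck_on n S (\<lambda>x. L (f x))"
proof (induction n arbitrary: f)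
  case 0
  then show ?case
    using assms by (auto intro: continuous_on_compose2[OF linear_continuous_on])
next
  case (Suc n)
  obtain f' where f': "\<And>x. x \<in> S \<Longrightarrow> (f has_derivative f' x) (at x)"
    "\<And>v. Ck_on n S (\<lambda>x. f' x v)"
    using Suc.prems by auto
  show ?case
  proof (rule Ck_on_SucI)
    show "((\<lambda>x. L (f x)) has_derivative (\<lambda>h. L (f' x h))) (at x)" if "x \<in> S" for x
      using bounded_linear.has_derivative[OF assms f'(1)[OF that]] .
    show "Ck_on n S (\<lambda>x. L (f' x v))" for v
      using Suc.IH[OF f'(2)] .
  qed
qed

lemma Ck_on_Pair: "Ck_on n S f \<Longrightarrow> Ck_on n S g \<Longrightarrow> Ck_on n S (\<lambda>x. (f x, g x))"
proof (induction n arbitrary: f g)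
  case 0
  then show ?case by (auto intro: continuous_on_Pair)
next
  case (Suc n)
  obtain f' where f': "\<And>x. x \<in> S \<Longrightarrow> (f has_derivative f' x) (at x)"
    "\<And>v. Ck_on n S (\<lambda>x. f' x v)"
    using Suc.prems(1) by auto
  obtain g' where g': "\<And>x. x \<in> S \<Longrightarrow> (g has_derivative g' x) (at x)"
    "\<And>v. Ck_on n S (\<lambda>x. g' x v)"
    using Suc.prems(2) by auto
  show ?case
  proof (rule Ck_on_SucI)
    show "((\<lambda>x. (f x, g x)) has_derivative (\<lambda>h. (f' x h, g' x h))) (at x)" if "x \<in> S" for x
      using has_derivative_Pair[OF f'(1)[OF that] g'(1)[OF that]] .
    show "Ck_on n S (\<lambda>x. (f' x v, g' x v))" for v
      using Suc.IH[OF f'(2) g'(2)] .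
  qed
qed

lemma Ck_on_add: "Ck_on n S f \<Longrightarrow> Ck_on n S g \<Longrightarrow> Ck_on n S (\<lambda>x. f x + g x)"
  using Ck_on_bounded_linear[OF bounded_linear_add[OF bounded_linear_fst bounded_linear_snd]
      Ck_on_Pair]
  by simp

lemma Ck_on_diff: "Ck_on n S f \<Longrightarrow> Ck_on n S g \<Longrightarrow> Ck_on n S (\<lambda>x. f x - g x)"
  using Ck_on_bounded_linear[OF bounded_linear_sub[OF bounded_linear_fst bounded_linear_snd]
      Ck_on_Pair]
  by simp

lemma Ck_on_bounded_bilinear:
  fixes prod :: "'b::real_normed_vector \<Rightarrow> 'c::real_normed_vector \<Rightarrow> 'd::real_normed_vector"
    and f :: "'a::real_normed_vector \<Rightarrow> 'b" and g :: "'a \<Rightarrow> 'c"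
  assumes "bounded_bilinear prod"
  shows "Ck_on n S f \<Longrightarrow> Ck_on n S g \<Longrightarrow> Ck_on n S (\<lambda>x. prod (f x) (g x))"
proof (induction n arbitrary: f g)
  case 0
  then show ?case
    by (simp add: bounded_bilinear.continuous_on[OF assms])
next
  case (Suc n)
  obtain f' where f': "\<And>x. x \<in> S \<Longrightarrow> (f has_derivative f' x) (at x)"
    "\<And>v. Ck_on n S (\<lambda>x. f' x v)"
    using Suc.prems(1) by auto
  obtain g' where g': "\<And>x. x \<in> S \<Longrightarrow> (g has_derivative g' x) (at x)"
    "\<And>v. Ck_on n S (\<lambda>x. g' x v)"
    using Suc.prems(2) by auto
  have f: "Ck_on n S f" and g: "Ck_on n S g"
    using Suc.prems by (simp_all only: Ck_on_Suc_imp_Ck_on)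
  show ?case
  proof (rule Ck_on_SucI)
    show "((\<lambda>x. prod (f x) (g x)) has_derivative
        (\<lambda>h. prod (f x) (g' x h) + prod (f' x h) (g x))) (at x)" if "x \<in> S" for x
      using bounded_bilinear.FDERIV[OF assms f'(1)[OF that] g'(1)[OF that]] .
    show "Ck_on n S (\<lambda>x. prod (f x) (g' x v) + prod (f' x v) (g x))" for v
      using Ck_on_add[OF Suc.IH[OF f g'(2)] Suc.IH[OF f'(2) g]] .
  qed
qed

lemma Ck_on_mult:
  fixes f g :: "'a::real_normed_vector \<Rightarrow> 'b::real_normed_algebra"
  shows "Ck_on n S f \<Longrightarrow> Ck_on n S g \<Longrightarrow> Ck_on n S (\<lambda>x. f x * g x)"
  by (rule Ck_on_bounded_bilinear[OF bounded_bilinear_mult])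

lemma Ck_on_inverse:
  fixes f :: "'a::real_normed_vector \<Rightarrow> 'b::real_normed_div_algebra"
  shows "Ck_on n S f \<Longrightarrow> \<forall>x\<in>S. f x \<noteq> 0 \<Longrightarrow> Ck_on n S (\<lambda>x. inverse (f x))"
proof (induction n arbitrary: f)
  case 0
  then show ?case by (auto intro: continuous_on_inverse)
next
  case (Suc n)
  obtain f' where f': "\<And>x. x \<in> S \<Longrightarrow> (f has_derivative f' x) (at x)"
    "\<And>v. Ck_on n S (\<lambda>x. f' x v)"
    using Suc.prems(1) by auto
  have inv: "Ck_on n S (\<lambda>x. inverse (f x))"
    using Suc.IH[OF Ck_on_Suc_imp_Ck_on] Suc.prems by blast
  show ?case
  proof (rule Ck_on_SucI)
    show "((\<lambda>x. inverse (f x)) has_derivative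
        (\<lambda>h. - (inverse (f x) * f' x h * inverse (f x)))) (at x)" if "x \<in> S" for x
      using Suc.prems(2) that by (intro Deriv.has_derivative_inverse f'(1)) auto
    show "Ck_on n S (\<lambda>x. - (inverse (f x) * f' x v * inverse (f x)))" for v
      using Ck_on_diff[OF Ck_on_const[of n S 0] Ck_on_mult[OF Ck_on_mult[OF inv f'(2)] inv]] by simp
  qed
qed

lemma Ck_on_sqrt:
  fixes f :: "'a::real_normed_vector \<Rightarrow> real"
  shows "Ck_on n S f \<Longrightarrow> \<forall>x\<in>S. f x > 0 \<Longrightarrow> Ck_on n S (\<lambda>x. sqrt (f x))"
proof (induction n arbitrary: f)
  case 0
  then show ?case by (auto intro: continuous_on_real_sqrt)
next
  case (Suc n)
  obtain f' where f': "\<And>x. x \<in> S \<Longrightarrow> (f has_derivative f' x) (at x)"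
    "\<And>v. Ck_on n S (\<lambda>x. f' x v)"
    using Suc.prems(1) by auto
  have "Ck_on n S (\<lambda>x. sqrt (f x))"
    using Suc.IH[OF Ck_on_Suc_imp_Ck_on] Suc.prems by blast
  then have inv: "Ck_on n S (\<lambda>x. inverse (sqrt (f x)))"
    using Suc.prems(2) by (intro Ck_on_inverse) auto
  show ?case
  proof (rule Ck_on_SucI)
    show "((\<lambda>x. sqrt (f x)) has_derivative (\<lambda>h. f' x h * (inverse (sqrt (f x)) / 2))) (at x)"
      if "x \<in> S" for x
    proof -
      have "0 < f x"
        using Suc.prems(2) that by blast
      then have "DERIV sqrt (f x) :> inverse (sqrt (f x)) / 2"
        by (rule DERIV_real_sqrt)
      from DERIV_compose_FDERIV[OF this f'(1)[OF that]] show ?thesis .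
    qed
    show "Ck_on n S (\<lambda>x. f' x v * (inverse (sqrt (f x)) / 2))" for v
      using Ck_on_mult[OF f'(2) Ck_on_mult[OF inv Ck_on_const[of n S "inverse 2"]]]
      by (simp only: divide_inverse)
  qed
qed

definition Cinf_on :: "'a::real_normed_vector set \<Rightarrow> ('a \<Rightarrow> 'b::real_normed_vector) \<Rightarrow> bool" where
  "Cinf_on S f \<longleftrightarrow> (\<forall>n. Ck_on n S f)"

lemma smooth_on_iff_Cinf_on: "smooth_on S f \<longleftrightarrow> open S \<and> Cinf_on S f"
  by (simp add: smooth_on_def Cinf_on_def)

lemma Cinf_on_imp_continuous_on: "Cinf_on S f \<Longrightarrow> continuous_on S f"
  by (metis Cinf_on_def Ck_on.simps(1))

lemma Cinf_on_subset: "Cinf_on S f \<Longrightarrow> T \<subseteq> S \<Longrightarrow> Cinf_on T f"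
  unfolding Cinf_on_def using Ck_on_subset by blast

lemma Cinf_on_const: "Cinf_on S (\<lambda>x. c)"
  by (simp add: Cinf_on_def Ck_on_const)

lemma Cinf_on_id: "Cinf_on S (\<lambda>x. x)"
  by (simp add: Cinf_on_def Ck_on_id)

lemma Cinf_on_bounded_linear: "bounded_linear L \<Longrightarrow> Cinf_on S f \<Longrightarrow> Cinf_on S (\<lambda>x. L (f x))"
  by (simp add: Cinf_on_def Ck_on_bounded_linear)

lemma Cinf_on_bounded_bilinear:
  fixes prod :: "'b::real_normed_vector \<Rightarrow> 'c::real_normed_vector \<Rightarrow> 'd::real_normed_vector"
    and f :: "'a::real_normed_vector \<Rightarrow> 'b" and g :: "'a \<Rightarrow> 'c"
  shows "bounded_bilinear prod \<Longrightarrow> Cinf_on S f \<Longrightarrow> Cinf_on S g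
    \<Longrightarrow> Cinf_on S (\<lambda>x. prod (f x) (g x))"
  by (simp add: Cinf_on_def Ck_on_bounded_bilinear)

lemma Cinf_on_fst: "Cinf_on S f \<Longrightarrow> Cinf_on S (\<lambda>x. fst (f x))"
  by (rule Cinf_on_bounded_linear[OF bounded_linear_fst])

lemma Cinf_on_snd: "Cinf_on S f \<Longrightarrow> Cinf_on S (\<lambda>x. snd (f x))"
  by (rule Cinf_on_bounded_linear[OF bounded_linear_snd])

lemma Cinf_on_Pair: "Cinf_on S f \<Longrightarrow> Cinf_on S g \<Longrightarrow> Cinf_on S (\<lambda>x. (f x, g x))"
  by (simp add: Cinf_on_def Ck_on_Pair)

lemma Cinf_on_add: "Cinf_on S f \<Longrightarrow> Cinf_on S g \<Longrightarrow> Cinf_on S (\<lambda>x. f x + g x)"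
  by (simp add: Cinf_on_def Ck_on_add)

lemma Cinf_on_diff: "Cinf_on S f \<Longrightarrow> Cinf_on S g \<Longrightarrow> Cinf_on S (\<lambda>x. f x - g x)"
  by (simp add: Cinf_on_def Ck_on_diff)

lemma Cinf_on_minus: "Cinf_on S f \<Longrightarrow> Cinf_on S (\<lambda>x. - f x)"
  using Cinf_on_diff[OF Cinf_on_const[of S 0]] by simp

lemma Cinf_on_mult:
  fixes f g :: "'a::real_normed_vector \<Rightarrow> 'b::real_normed_algebra"
  shows "Cinf_on S f \<Longrightarrow> Cinf_on S g \<Longrightarrow> Cinf_on S (\<lambda>x. f x * g x)"
  by (simp add: Cinf_on_def Ck_on_mult)

lemma Cinf_on_scaleR: "Cinf_on S f \<Longrightarrow> Cinf_on S g \<Longrightarrow> Cinf_on S (\<lambda>x. f x *\<^sub>R g x)"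
  by (rule Cinf_on_bounded_bilinear[OF bounded_bilinear_scaleR])

lemma Cinf_on_inner: "Cinf_on S f \<Longrightarrow> Cinf_on S g \<Longrightarrow> Cinf_on S (\<lambda>x. f x \<bullet> g x)"
  by (rule Cinf_on_bounded_bilinear[OF bounded_bilinear_inner])

lemma Cinf_on_power:
  fixes f :: "'a::real_normed_vector \<Rightarrow> 'b::real_normed_algebra_1"
  shows "Cinf_on S f \<Longrightarrow> Cinf_on S (\<lambda>x. f x ^ n)"
  by (induction n) (simp_all add: Cinf_on_const Cinf_on_mult)

lemma Cinf_on_inverse:
  fixes f :: "'a::real_normed_vector \<Rightarrow> 'b::real_normed_div_algebra"
  shows "Cinf_on S f \<Longrightarrow> \<forall>x\<in>S. f x \<noteq> 0 \<Longrightarrow> Cinf_on S (\<lambda>x. inverse (f x))"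
  by (simp add: Cinf_on_def Ck_on_inverse)

lemma Cinf_on_divide:
  fixes f g :: "'a::real_normed_vector \<Rightarrow> 'b::real_normed_field"
  shows "Cinf_on S f \<Longrightarrow> Cinf_on S g \<Longrightarrow> \<forall>x\<in>S. g x \<noteq> 0
    \<Longrightarrow> Cinf_on S (\<lambda>x. f x / g x)"
  unfolding divide_inverse by (intro Cinf_on_mult Cinf_on_inverse)

lemma Cinf_on_sqrt: "Cinf_on S f \<Longrightarrow> \<forall>x\<in>S. f x > 0 \<Longrightarrow> Cinf_on S (\<lambda>x. sqrt (f x))"
  by (simp add: Cinf_on_def Ck_on_sqrt)

lemmas Cinf_on_intros =
  Cinf_on_const Cinf_on_id Cinf_on_fst Cinf_on_snd Cinf_on_Pair Cinf_on_add Cinf_on_diff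
  Cinf_on_minus Cinf_on_mult Cinf_on_scaleR Cinf_on_inner Cinf_on_power

lemma smooth_mapI_Cinf_on:
  assumes "\<And>x. x \<in> X \<Longrightarrow> \<exists>U F. open U \<and> x \<in> U \<and> Cinf_on U F \<and> (\<forall>y\<in>U \<inter> X. F y = f y)"
  shows "smooth_map X f"
  using assms unfolding smooth_map_def smooth_on_iff_Cinf_on by blast

lemma smooth_map_if_Cinf_on_open_superset:
  assumes "open U" "X \<subseteq> U" "Cinf_on U f"
  shows "smooth_map X f"
  using assms by (intro smooth_mapI_Cinf_on) blast

lemma smooth_map_imp_continuous_on:
  assumes "smooth_map X f"
  shows "continuous_on X f"
  unfolding continuous_on_eq_continuous_within
proof
  fix x assume "x \<in> X"
  then obtain U F where U: "open U" "x \<in> U" "smooth_on U F" "\<forall>y\<in>U \<inter> X. F y = f y"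
    using assms unfolding smooth_map_def by blast
  then have "continuous_on U F"
    by (simp add: smooth_on_iff_Cinf_on Cinf_on_imp_continuous_on)
  then have "continuous (at x within X) F"
    using U(1,2) by (simp add: continuous_on_eq_continuous_at continuous_at_imp_continuous_within)
  moreover have "openin (top_of_set X) (X \<inter> U)"
    using U(1) by (rule openin_open_Int)
  ultimately show "continuous (at x within X) f"
    by (rule continuous_transform_within_openin) (use U \<open>x \<in> X\<close> in auto)
qed

lemma connected_if_diffeomorphic_sets:
  assumes "diffeomorphic_sets A M" "connected A"
  shows "connected M"
proof -
  obtain f where "bij_betw f A M" "smooth_map A f"
    using assms(1) unfolding diffeomorphic_sets_def diffeo_betw_def by blast
  then show ?thesis
    using connected_continuous_image[OF smooth_map_imp_continuous_on[OF \<open>smooth_map A f\<close>] assms(2)]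
    by (simp add: bij_betw_def)
qed

lemma connected_subset_open_partition:
  assumes "connected D" "D \<subseteq> X \<union> Y" "X \<inter> Y = {}"
    and "openin (top_of_set (X \<union> Y)) X" "openin (top_of_set (X \<union> Y)) Y"
  shows "D \<subseteq> X \<or> D \<subseteq> Y"
proof -
  obtain UX UY where "open UX" "(X \<union> Y) \<inter> UX = X" "open UY" "(X \<union> Y) \<inter> UY = Y"
    using assms(4,5) unfolding openin_open by metis
  then have "D \<inter> UX = D \<inter> X" "D \<inter> UY = D \<inter> Y"
    using assms(2) by blast+
  then have "UX \<inter> D = {} \<or> UY \<inter> D = {}"
    using assms(2,3) by (intro connectedD[OF assms(1) \<open>open UX\<close> \<open>open UY\<close>]) blast+
  then show ?thesis
    using assms(2) \<open>D \<inter> UX = D \<inter> X\<close> \<open>D \<inter> UY = D \<inter> Y\<close> by blast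
qed

lemma components_open_partition:
  assumes "X \<inter> Y = {}" "connected X" "connected Y" "X \<noteq> {}" "Y \<noteq> {}"
    and "openin (top_of_set (X \<union> Y)) X" "openin (top_of_set (X \<union> Y)) Y"
  shows "components (X \<union> Y) = {X, Y}"
proof -
  have sub: "D \<subseteq> X \<or> D \<subseteq> Y" if "connected D" "D \<subseteq> X \<union> Y" for D
    using connected_subset_open_partition[OF that assms(1,6,7)] .
  have "X \<in> components (X \<union> Y)"
    unfolding in_components_maximal using assms(1,2,4) sub by blast
  moreover have "Y \<in> components (X \<union> Y)"
    unfolding in_components_maximal using assms(1,3,5) sub by blast
  moreover have "C = X \<or> C = Y" if C: "C \<in> components (X \<union> Y)" for C
  proof -
    have "C \<subseteq> X \<or> C \<subseteq> Y"
      using sub in_components_connected[OF C] in_components_subset[OF C] by blast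
    then show ?thesis
      using components_maximal[OF C] in_components_nonempty[OF C] assms(2,3) by blast
  qed
  ultimately show ?thesis
    by blast
qed

section \<open>The disc and the plane\<close>

definition plane_to_ball :: "'a::real_inner \<Rightarrow> 'a" where
  "plane_to_ball x = x /\<^sub>R sqrt (1 + x \<bullet> x)"

definition ball_to_plane :: "'a::real_inner \<Rightarrow> 'a" where
  "ball_to_plane y = y /\<^sub>R sqrt (1 - y \<bullet> y)"

lemma inner_self_less_1_iff: "y \<bullet> y < 1 \<longleftrightarrow> norm y < 1"
  by (simp add: norm_eq_sqrt_inner)

lemma one_add_inner_self_pos: "0 < 1 + x \<bullet> x"
  by (simp add: add_pos_nonneg)

lemma inner_plane_to_ball: "plane_to_ball x \<bullet> plane_to_ball x = (x \<bullet> x) / (1 + x \<bullet> x)"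
  using one_add_inner_self_pos[of x]
  unfolding plane_to_ball_def by (simp add: field_simps flip: power2_eq_square)

lemma plane_to_ball_in_ball: "plane_to_ball x \<in> ball 0 1"
proof -
  have "plane_to_ball x \<bullet> plane_to_ball x < 1"
    using one_add_inner_self_pos[of x] unfolding inner_plane_to_ball by (simp add: divide_less_eq)
  then show ?thesis
    by (simp add: inner_self_less_1_iff)
qed

lemma ball_to_plane_plane_to_ball: "ball_to_plane (plane_to_ball x) = x"
proof -
  have "1 - plane_to_ball x \<bullet> plane_to_ball x = inverse (1 + x \<bullet> x)"
    using one_add_inner_self_pos[of x] unfolding inner_plane_to_ball by (simp add: field_simps)
  then show ?thesis
    using one_add_inner_self_pos[of x]
    by (simp add: ball_to_plane_def plane_to_ball_def real_sqrt_inverse)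
qed

lemma plane_to_ball_ball_to_plane:
  assumes "y \<in> ball 0 1"
  shows "plane_to_ball (ball_to_plane y) = y"
proof -
  have y: "y \<bullet> y < 1"
    using assms by (simp add: inner_self_less_1_iff)
  then have "ball_to_plane y \<bullet> ball_to_plane y = (y \<bullet> y) / (1 - y \<bullet> y)"
    unfolding ball_to_plane_def by (simp add: field_simps flip: power2_eq_square)
  then have "1 + ball_to_plane y \<bullet> ball_to_plane y = inverse (1 - y \<bullet> y)"
    using y by (simp add: field_simps)
  then show ?thesis
    using y by (simp add: ball_to_plane_def plane_to_ball_def real_sqrt_inverse)
qed

lemma Cinf_on_plane_to_ball: "Cinf_on S f \<Longrightarrow> Cinf_on S (\<lambda>x. plane_to_ball (f x))"
  unfolding plane_to_ball_def
  by (intro Cinf_on_intros Cinf_on_inverse Cinf_on_sqrt)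
    (simp_all add: one_add_inner_self_pos less_imp_neq[symmetric])

lemma Cinf_on_ball_to_plane: "Cinf_on (ball 0 1) ball_to_plane"
  unfolding ball_to_plane_def[abs_def]
  by (intro Cinf_on_intros Cinf_on_inverse Cinf_on_sqrt)
    (auto simp: inner_self_less_1_iff[symmetric])

lemma diffeo_betw_ball_if_global_chart:
  fixes chart :: "'a::real_inner \<Rightarrow> 'b::real_normed_vector"
  assumes "\<And>p. chart p \<in> M" and "\<And>p. chart_inv (chart p) = p"
    and "\<And>q. q \<in> M \<Longrightarrow> chart (chart_inv q) = q"
    and "Cinf_on (ball 0 1) (\<lambda>y. chart (ball_to_plane y))"
    and "smooth_map M (\<lambda>q. plane_to_ball (chart_inv q))"
  shows "diffeo_betw (\<lambda>y. chart (ball_to_plane y)) (ball 0 1) M"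
  unfolding diffeo_betw_def
proof (intro conjI exI)
  show "smooth_map (ball 0 1) (\<lambda>y. chart (ball_to_plane y))"
    using assms(4) by (rule smooth_map_if_Cinf_on_open_superset[OF open_ball subset_refl])
  show "\<forall>y\<in>ball 0 1. plane_to_ball (chart_inv (chart (ball_to_plane y))) = y"
    by (simp add: assms(2) plane_to_ball_ball_to_plane)
  show "\<forall>q\<in>M. chart (ball_to_plane (plane_to_ball (chart_inv q))) = q"
    by (simp add: assms(3) ball_to_plane_plane_to_ball)
  then show "bij_betw (\<lambda>y. chart (ball_to_plane y)) (ball 0 1) M"
    using assms(1,2) plane_to_ball_in_ball
    by (intro bij_betw_byWitness[where f' = "\<lambda>q. plane_to_ball (chart_inv q)"])
      (auto simp: plane_to_ball_ball_to_plane)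
qed (rule assms(5))

section \<open>The surface and its two pieces\<close>

definition prod_sum_swap :: "real \<Rightarrow> real \<Rightarrow> real \<Rightarrow> real \<Rightarrow> bool" where
  "prod_sum_swap a b c d \<longleftrightarrow> a * b = c + d \<and> c * d = a + b"

lemma prod_sum_swap_commute: "prod_sum_swap a b c d \<longleftrightarrow> prod_sum_swap c d a b"
  unfolding prod_sum_swap_def by auto

lemma prod_sum_swap_b:
  assumes "prod_sum_swap a b c d"
  shows "b * (a * c - 1) = a + c\<^sup>2"
proof -
  have "c * (a * b - c) = a + b"
    using assms unfolding prod_sum_swap_def by simp
  then show ?thesis
    by (simp add: power2_eq_square algebra_simps)
qed

lemma prod_sum_swap_d: "prod_sum_swap a b c d \<Longrightarrow> d * (a * c - 1) = c + a\<^sup>2"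
  using prod_sum_swap_b[of c d a b] by (simp add: prod_sum_swap_commute mult.commute)

lemma prod_sum_swap_pos_iff:
  assumes "prod_sum_swap a b c d"
  shows "0 < c \<and> 0 < d \<longleftrightarrow> 0 < a \<and> 0 < b"
proof -
  have pos: "0 < x \<and> 0 < y" if "x * y = u + v" "u * v = x + y" "0 < u" "0 < v" for x y u v :: real
  proof -
    have "0 < x + y" and "0 < x * y"
      using that by (metis add_pos_pos mult_pos_pos)+
    then show ?thesis
      by (auto simp: zero_less_mult_iff)
  qed
  show ?thesis
    using assms pos[of a b c d] pos[of c d a b] unfolding prod_sum_swap_def by auto
qed

definition rho :: "real \<Rightarrow> real" where
  "rho z = sqrt (4 + z\<^sup>2)"

lemma rho_squared: "(rho z)\<^sup>2 = 4 + z\<^sup>2"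
  by (simp add: rho_def add_nonneg_nonneg)

lemma abs_less_rho: "\<bar>z\<bar> < rho z"
  unfolding rho_def by (simp add: real_less_rsqrt)

lemma rho_minus [simp]: "rho (- z) = rho z"
  by (simp add: rho_def)

lemma rho_pos: "0 < rho z"
  using abs_less_rho[of z] by linarith

lemma Cinf_on_rho: "Cinf_on U f \<Longrightarrow> Cinf_on U (\<lambda>x. rho (f x))"
  unfolding rho_def by (intro Cinf_on_intros Cinf_on_sqrt) (auto intro: add_pos_nonneg)

lemma add_sq_sub_rho_sq: "(a + c)\<^sup>2 - (rho (a - c))\<^sup>2 = 4 * (a * c - 1)"
  using rho_squared[of "a - c"] by (simp add: power2_eq_square algebra_simps)

lemma rho_less_imp_one_less_mult:
  assumes "rho (a - c) < a + c"
  shows "1 < a * c"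
proof -
  have "(rho (a - c))\<^sup>2 < (a + c)\<^sup>2"
    using assms rho_pos[of "a - c"] by (intro power_strict_mono) auto
  then show ?thesis
    using add_sq_sub_rho_sq[of a c] by simp
qed

lemma prod_sum_swap_rho_less:
  assumes "prod_sum_swap a b c d" "0 < c" "0 < d"
  shows "rho (a - c) < a + c"
proof -
  have "0 < a" "0 < b"
    using assms prod_sum_swap_pos_iff by blast+
  then have "0 < b * (a * c - 1)"
    using prod_sum_swap_b[OF assms(1)] by (simp add: add_pos_nonneg)
  then have "1 < a * c"
    using \<open>0 < b\<close> by (simp add: zero_less_mult_iff)
  then have "(rho (a - c))\<^sup>2 < (a + c)\<^sup>2"
    using add_sq_sub_rho_sq[of a c] by simp
  then show ?thesis
    using \<open>0 < a\<close> \<open>0 < c\<close> by (simp add: power2_less_imp_less)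
qed

lemma prod_sum_swap_less_rho:
  assumes "prod_sum_swap a b c d" "\<not> (0 < c \<and> 0 < d)"
  shows "a + c < rho (a - c)"
proof (rule ccontr)
  assume "\<not> a + c < rho (a - c)"
  then have ge: "rho (a - c) \<le> a + c" by simp
  then have "0 < a" "0 < c"
    using abs_less_rho[of "a - c"] by auto
  have "(rho (a - c))\<^sup>2 \<le> (a + c)\<^sup>2"
    using ge rho_pos[of "a - c"] by (intro power_mono) auto
  then have "1 \<le> a * c"
    using add_sq_sub_rho_sq[of a c] by simp
  have "0 < b * (a * c - 1)"
    using prod_sum_swap_b[OF assms(1)] \<open>0 < a\<close> by (simp add: add_pos_nonneg)
  then have "0 < b"
    using \<open>1 \<le> a * c\<close> by (simp add: zero_less_mult_iff)
  then show False
    using assms prod_sum_swap_pos_iff \<open>0 < a\<close> by blast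
qed

definition b_of :: "real \<Rightarrow> real \<Rightarrow> real" where
  "b_of a c = (a + c\<^sup>2) / (a * c - 1)"

definition d_of :: "real \<Rightarrow> real \<Rightarrow> real" where
  "d_of a c = (c + a\<^sup>2) / (a * c - 1)"

lemma prod_sum_swap_b_of_d_of: "a * c \<noteq> 1 \<Longrightarrow> prod_sum_swap a (b_of a c) c (d_of a c)"
  unfolding prod_sum_swap_def b_of_def d_of_def by (simp add: field_simps power2_eq_square)

lemma prod_sum_swap_imp_eq_b_of_d_of:
  "prod_sum_swap a b c d \<Longrightarrow> a * c \<noteq> 1 \<Longrightarrow> b = b_of a c \<and> d = d_of a c"
  using prod_sum_swap_b prod_sum_swap_d unfolding b_of_def d_of_def
  by (simp add: eq_divide_eq)

lemma Cinf_on_b_of_d_of: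
  assumes "Cinf_on U A" "Cinf_on U C" "\<forall>x\<in>U. A x * C x \<noteq> 1"
  shows "Cinf_on U (\<lambda>x. b_of (A x) (C x))" "Cinf_on U (\<lambda>x. d_of (A x) (C x))"
  unfolding b_of_def d_of_def using assms by (intro Cinf_on_intros Cinf_on_divide; simp)+

definition surface :: "(real \<times> real \<times> real \<times> real) set" where
  "surface = {(w, x, y, z). w + x + y + z = 3 + w * y \<and> w * y = z * x}"

definition unshift :: "real \<Rightarrow> real \<Rightarrow> real \<Rightarrow> real \<Rightarrow> real \<times> real \<times> real \<times> real" where
  "unshift a b c d = (1 + a, 1 + c, 1 + b, 1 + d)"

definition coord_a :: "real \<times> real \<times> real \<times> real \<Rightarrow> real" where
  "coord_a q = fst q - 1"

definition coord_b :: "real \<times> real \<times> real \<times> real \<Rightarrow> real" where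
  "coord_b q = fst (snd (snd q)) - 1"

definition coord_c :: "real \<times> real \<times> real \<times> real \<Rightarrow> real" where
  "coord_c q = fst (snd q) - 1"

definition coord_d :: "real \<times> real \<times> real \<times> real \<Rightarrow> real" where
  "coord_d q = snd (snd (snd q)) - 1"

lemma coords_unshift [simp]:
  "coord_a (unshift a b c d) = a" "coord_b (unshift a b c d) = b"
  "coord_c (unshift a b c d) = c" "coord_d (unshift a b c d) = d"
  by (simp_all add: unshift_def coord_a_def coord_b_def coord_c_def coord_d_def)

lemma unshift_coords: "unshift (coord_a q) (coord_b q) (coord_c q) (coord_d q) = q"
  by (cases q) (simp add: unshift_def coord_a_def coord_b_def coord_c_def coord_d_def)

lemma mem_surface_iff:
  "q \<in> surface \<longleftrightarrow> prod_sum_swap (coord_a q) (coord_b q) (coord_c q) (coord_d q)"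
  by (cases q)
    (auto simp: surface_def prod_sum_swap_def coord_a_def coord_b_def coord_c_def coord_d_def
      algebra_simps)

lemma unshift_mem_surface_iff: "unshift a b c d \<in> surface \<longleftrightarrow> prod_sum_swap a b c d"
  by (simp add: mem_surface_iff)

lemma Cinf_on_coords: "Cinf_on U coord_a" "Cinf_on U coord_b" "Cinf_on U coord_c" "Cinf_on U coord_d"
  unfolding coord_a_def[abs_def] coord_b_def[abs_def] coord_c_def[abs_def] coord_d_def[abs_def]
  by (intro Cinf_on_intros)+

lemma Cinf_on_unshift:
  "Cinf_on U A \<Longrightarrow> Cinf_on U B \<Longrightarrow> Cinf_on U C \<Longrightarrow> Cinf_on U D
    \<Longrightarrow> Cinf_on U (\<lambda>x. unshift (A x) (B x) (C x) (D x))"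
  unfolding unshift_def by (intro Cinf_on_intros)

definition X_region :: "(real \<times> real \<times> real \<times> real) set" where
  "X_region = {q. rho (coord_a q - coord_c q) < coord_a q + coord_c q}"

definition Y_region :: "(real \<times> real \<times> real \<times> real) set" where
  "Y_region = {q. coord_a q + coord_c q < rho (coord_a q - coord_c q)}"

lemma open_X_region: "open X_region"
  unfolding X_region_def
  by (intro open_Collect_less Cinf_on_imp_continuous_on Cinf_on_rho Cinf_on_intros Cinf_on_coords)

lemma open_Y_region: "open Y_region"
  unfolding Y_region_def
  by (intro open_Collect_less Cinf_on_imp_continuous_on Cinf_on_rho Cinf_on_intros Cinf_on_coords)

definition surface_X :: "(real \<times> real \<times> real \<times> real) set" where
  "surface_X = surface \<inter> X_region"

definition surface_Y :: "(real \<times> real \<times> real \<times> real) set" where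
  "surface_Y = surface \<inter> Y_region"

lemma surface_X_eq_pos_cd: "surface_X = {q \<in> surface. 0 < coord_c q \<and> 0 < coord_d q}"
proof -
  have "q \<in> X_region \<longleftrightarrow> 0 < coord_c q \<and> 0 < coord_d q" if "q \<in> surface" for q
    using that prod_sum_swap_rho_less prod_sum_swap_less_rho
    unfolding X_region_def mem_surface_iff by fastforce
  then show ?thesis
    unfolding surface_X_def by blast
qed

lemma surface_X_eq_pos_ab: "surface_X = {q \<in> surface. 0 < coord_a q \<and> 0 < coord_b q}"
  unfolding surface_X_eq_pos_cd mem_surface_iff using prod_sum_swap_pos_iff by blast

lemma surface_rho_cases:
  assumes "q \<in> surface"
  shows "rho (coord_a q - coord_c q) < coord_a q + coord_c q
    \<or> coord_a q + coord_c q < rho (coord_a q - coord_c q)"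
  using assms prod_sum_swap_less_rho prod_sum_swap_rho_less unfolding mem_surface_iff by blast

lemma surface_eq_Un: "surface = surface_X \<union> surface_Y"
  using surface_rho_cases unfolding surface_X_def surface_Y_def X_region_def Y_region_def by blast

lemma surface_X_Int_surface_Y: "surface_X \<inter> surface_Y = {}"
  unfolding surface_X_def surface_Y_def X_region_def Y_region_def by auto

lemma openin_surface_X: "openin (top_of_set surface) surface_X"
  unfolding surface_X_def by (rule openin_open_Int[OF open_X_region])

lemma openin_surface_Y: "openin (top_of_set surface) surface_Y"
  unfolding surface_Y_def by (rule openin_open_Int[OF open_Y_region])

section \<open>A chart for the piece containing (3, 3, 3, 3)\<close>

text \<open>\<open>psi = exp \<circ> arsinh\<close> is a diffeomorphism from the line onto the positive half-line with
  inverse \<open>psi_inv = sinh \<circ> ln\<close>; both are algebraic.\<close>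

definition psi :: "real \<Rightarrow> real" where
  "psi v = v + sqrt (v\<^sup>2 + 1)"

definition psi_inv :: "real \<Rightarrow> real" where
  "psi_inv s = (s\<^sup>2 - 1) / (2 * s)"

lemma psi_pos: "0 < psi v"
  unfolding psi_def using real_less_rsqrt[of "\<bar>v\<bar>" "v\<^sup>2 + 1"] by simp

lemma psi_inv_psi: "psi_inv (psi v) = v"
proof -
  have "(psi v)\<^sup>2 - 1 = 2 * psi v * v"
    unfolding psi_def by (simp add: power2_eq_square algebra_simps add_nonneg_nonneg
        flip: real_sqrt_mult)
  then show ?thesis
    unfolding psi_inv_def using psi_pos[of v] by simp
qed

lemma psi_psi_inv:
  assumes "0 < s"
  shows "psi (psi_inv s) = s"
proof -
  have "(psi_inv s)\<^sup>2 + 1 = ((s\<^sup>2 + 1) / (2 * s))\<^sup>2"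
    unfolding psi_inv_def using assms by (simp add: field_simps power2_eq_square)
  then have "sqrt ((psi_inv s)\<^sup>2 + 1) = (s\<^sup>2 + 1) / (2 * s)"
    using assms by simp
  then show ?thesis
    unfolding psi_def using assms by (simp add: psi_inv_def field_simps power2_eq_square)
qed

lemma Cinf_on_psi: "Cinf_on U f \<Longrightarrow> Cinf_on U (\<lambda>x. psi (f x))"
  unfolding psi_def by (intro Cinf_on_intros Cinf_on_sqrt) (auto intro: add_nonneg_pos)

lemma Cinf_on_psi_inv: "Cinf_on U f \<Longrightarrow> \<forall>x\<in>U. f x \<noteq> 0 \<Longrightarrow> Cinf_on U (\<lambda>x. psi_inv (f x))"
  unfolding psi_inv_def by (intro Cinf_on_intros Cinf_on_divide) auto

definition graph_point :: "real \<Rightarrow> real \<Rightarrow> real \<times> real \<times> real \<times> real" where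
  "graph_point a c = unshift a (b_of a c) c (d_of a c)"

definition X_a :: "real \<Rightarrow> real \<Rightarrow> real" where
  "X_a z v = (rho z + psi v + z) / 2"

definition X_c :: "real \<Rightarrow> real \<Rightarrow> real" where
  "X_c z v = (rho z + psi v - z) / 2"

definition X_chart :: "real \<times> real \<Rightarrow> real \<times> real \<times> real \<times> real" where
  "X_chart p = graph_point (X_a (fst p) (snd p)) (X_c (fst p) (snd p))"

definition X_chart_inv :: "real \<times> real \<times> real \<times> real \<Rightarrow> real \<times> real" where
  "X_chart_inv q =
    (coord_a q - coord_c q, psi_inv (coord_a q + coord_c q - rho (coord_a q - coord_c q)))"

lemma X_a_sub_X_c: "X_a z v - X_c z v = z"
  by (simp add: X_a_def X_c_def field_simps)

lemma X_a_add_X_c: "X_a z v + X_c z v = rho z + psi v"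
  by (simp add: X_a_def X_c_def field_simps)

lemma one_less_X_a_mult_X_c: "1 < X_a z v * X_c z v"
  using psi_pos[of v] by (intro rho_less_imp_one_less_mult) (simp add: X_a_sub_X_c X_a_add_X_c)

lemma X_chart_mem_surface_X: "X_chart p \<in> surface_X"
  using one_less_X_a_mult_X_c[of "fst p" "snd p"] psi_pos[of "snd p"]
  by (simp add: X_chart_def graph_point_def surface_X_def X_region_def unshift_mem_surface_iff
      prod_sum_swap_b_of_d_of X_a_sub_X_c X_a_add_X_c)

lemma X_chart_inv_X_chart: "X_chart_inv (X_chart p) = p"
  by (simp add: X_chart_inv_def X_chart_def graph_point_def X_a_sub_X_c X_a_add_X_c psi_inv_psi)

lemma X_chart_X_chart_inv:
  assumes "q \<in> surface_X"
  shows "X_chart (X_chart_inv q) = q"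
proof -
  define a c where "a = coord_a q" and "c = coord_c q"
  have pos: "0 < a + c - rho (a - c)"
    using assms by (simp add: surface_X_def X_region_def a_def c_def)
  then have "1 < a * c"
    by (intro rho_less_imp_one_less_mult) simp
  then have "coord_b q = b_of a c" "coord_d q = d_of a c"
    using assms prod_sum_swap_imp_eq_b_of_d_of
    by (auto simp: surface_X_def mem_surface_iff a_def c_def)
  moreover have "X_a (a - c) (psi_inv (a + c - rho (a - c))) = a"
    "X_c (a - c) (psi_inv (a + c - rho (a - c))) = c"
    using pos by (simp_all add: X_a_def X_c_def psi_psi_inv)
  ultimately show ?thesis
    using unshift_coords[of q] by (simp add: X_chart_def X_chart_inv_def graph_point_def a_def c_def)
qed

lemma Cinf_on_X_a_X_c:
  assumes "Cinf_on U Z" "Cinf_on U V"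
  shows "Cinf_on U (\<lambda>x. X_a (Z x) (V x))" "Cinf_on U (\<lambda>x. X_c (Z x) (V x))"
  unfolding X_a_def X_c_def
  using assms by (intro Cinf_on_intros Cinf_on_divide Cinf_on_rho Cinf_on_psi; simp)+

lemma Cinf_on_X_chart: "Cinf_on U P \<Longrightarrow> Cinf_on U (\<lambda>x. X_chart (P x))"
  unfolding X_chart_def graph_point_def
  by (intro Cinf_on_unshift Cinf_on_b_of_d_of Cinf_on_X_a_X_c Cinf_on_intros)
    (simp_all add: one_less_X_a_mult_X_c[THEN less_imp_neq, THEN not_sym])

lemma smooth_map_X_chart_inv: "smooth_map surface_X (\<lambda>q. plane_to_ball (X_chart_inv q))"
proof (rule smooth_map_if_Cinf_on_open_superset[OF open_X_region])
  show "surface_X \<subseteq> X_region"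
    by (simp add: surface_X_def)
  show "Cinf_on X_region (\<lambda>q. plane_to_ball (X_chart_inv q))"
    unfolding X_chart_inv_def
    by (intro Cinf_on_plane_to_ball Cinf_on_intros Cinf_on_psi_inv Cinf_on_rho Cinf_on_coords)
      (auto simp: X_region_def)
qed

lemma diffeomorphic_ball_surface_X: "diffeomorphic_sets (ball (0 :: real \<times> real) 1) surface_X"
  unfolding diffeomorphic_sets_def
  by (intro exI[of _ "\<lambda>y. X_chart (ball_to_plane y)"]
      diffeo_betw_ball_if_global_chart[where chart_inv = X_chart_inv]
      X_chart_mem_surface_X X_chart_inv_X_chart X_chart_X_chart_inv Cinf_on_X_chart
      Cinf_on_ball_to_plane smooth_map_X_chart_inv)

section \<open>A chart for the other piece\<close>

definition kappa :: "real \<Rightarrow> real" where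
  "kappa v = rho v - v"

definition mult_kappa_inv :: "real \<Rightarrow> real" where
  "mult_kappa_inv y = y / sqrt (4 - 2 * y)"

lemma kappa_pos: "0 < kappa v"
  using abs_less_rho[of v] by (simp add: kappa_def)

lemma mult_kappa_eq: "v * kappa v = 2 - (kappa v)\<^sup>2 / 2"
  using rho_squared[of v] by (simp add: kappa_def power2_eq_square field_simps)

lemma mult_kappa_less_2: "v * kappa v < 2"
  using mult_kappa_eq[of v] kappa_pos[of v] by simp

lemma mult_kappa_inv_mult_kappa: "mult_kappa_inv (v * kappa v) = v"
proof -
  have "4 - 2 * (v * kappa v) = (kappa v)\<^sup>2"
    using mult_kappa_eq[of v] by simp
  then show ?thesis
    using kappa_pos[of v] by (simp add: mult_kappa_inv_def)
qed

lemma mult_kappa_mult_kappa_inv: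
  assumes "y < 2"
  shows "mult_kappa_inv y * kappa (mult_kappa_inv y) = y"
proof -
  define s where "s = sqrt (4 - 2 * y)"
  have s: "0 < s" "s\<^sup>2 = 4 - 2 * y"
    using assms by (simp_all add: s_def)
  then have "(y / s)\<^sup>2 + 4 = ((4 - y) / s)\<^sup>2"
    by (simp add: field_simps power2_eq_square)
  then have "rho (y / s) = (4 - y) / s"
    using s assms by (simp add: rho_def add.commute)
  then have "kappa (y / s) = s"
    using s by (simp add: kappa_def field_simps power2_eq_square)
  then show ?thesis
    using s by (simp add: mult_kappa_inv_def flip: s_def)
qed

lemma Cinf_on_kappa: "Cinf_on U f \<Longrightarrow> Cinf_on U (\<lambda>x. kappa (f x))"
  unfolding kappa_def by (intro Cinf_on_intros Cinf_on_rho)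

lemma Cinf_on_mult_kappa_inv:
  "Cinf_on U f \<Longrightarrow> \<forall>x\<in>U. f x < 2 \<Longrightarrow> Cinf_on U (\<lambda>x. mult_kappa_inv (f x))"
  unfolding mult_kappa_inv_def by (intro Cinf_on_intros Cinf_on_divide Cinf_on_sqrt) auto

text \<open>The chart for the second piece takes \<open>c = Y_a (- t) v\<close> and \<open>d = Y_b (- t) v\<close>:
  replacing \<open>t\<close> by \<open>- t\<close> swaps \<open>(a, b)\<close> with \<open>(c, d)\<close>.\<close>

definition Y_a :: "real \<Rightarrow> real \<Rightarrow> real" where
  "Y_a t v = (rho (t * v) * (v * kappa v - 1) + t * v) / 2"

text \<open>\<open>Y_b t v\<close> is \<open>b_of (Y_a t v) (Y_a (- t) v)\<close> with the common factor \<open>v\<close> of numerator and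
  denominator cancelled, using \<open>W (W - 2) = W t\<^sup>2 v\<^sup>2 / (W + 2)\<close>; this keeps it smooth across
  \<open>v = 0\<close>, where the chart blows the point \<open>a = c = -1\<close> up to the line \<open>b + d = 1\<close>.\<close>

definition Y_b :: "real \<Rightarrow> real \<Rightarrow> real" where
  "Y_b t v =
    (let W = rho (t * v); K = W * kappa v - t; L = W * kappa v + t
     in - 2 * (2 * L - 2 * W * K + v * K\<^sup>2 + W * t\<^sup>2 * v / (W + 2)) / (W\<^sup>2 * (kappa v) ^ 3))"

lemma Y_a_mult_Y_a_minus:
  "Y_a t v * Y_a (- t) v - 1 = - ((rho (t * v))\<^sup>2 * v * (kappa v) ^ 3) / 8"
proof -
  define W Q where "W = rho (t * v)" and "Q = kappa v"
  have W2: "W\<^sup>2 = 4 + (t * v)\<^sup>2"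
    by (simp add: W_def rho_squared)
  have Q: "v * Q = 2 - Q\<^sup>2 / 2"
    using mult_kappa_eq[of v] by (simp add: Q_def)
  have "Y_a t v * Y_a (- t) v - 1 = ((W * (v * Q - 1))\<^sup>2 - (t * v)\<^sup>2) / 4 - 1"
    by (simp add: Y_a_def W_def Q_def power2_eq_square field_simps)
  also have "\<dots> = ((W * (v * Q - 1))\<^sup>2 - (W\<^sup>2 - 4)) / 4 - 1"
    using W2 by simp
  also have "\<dots> = W\<^sup>2 * (v * Q) * (v * Q - 2) / 4"
    by (simp add: power2_eq_square field_simps)
  also have "\<dots> = - (W\<^sup>2 * v * Q ^ 3) / 8"
    by (subst (2) Q) (simp add: power2_eq_square power3_eq_cube field_simps)
  finally show ?thesis
    by (simp add: W_def Q_def)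
qed

lemma Y_b_mult:
  "Y_b t v * (Y_a t v * Y_a (- t) v - 1) = Y_a t v + (Y_a (- t) v)\<^sup>2"
proof -
  define W Q K L where "W = rho (t * v)" and "Q = kappa v"
    and "K = W * Q - t" and "L = W * Q + t"
  define B where "B = 2 * L - 2 * W * K + v * K\<^sup>2 + W * t\<^sup>2 * v / (W + 2)"
  have W2: "W\<^sup>2 = 4 + (t * v)\<^sup>2"
    by (simp add: W_def rho_squared)
  have pos: "0 < W" "0 < Q"
    using rho_pos kappa_pos by (simp_all add: W_def Q_def)
  have "W * (W - 2) = W * t\<^sup>2 * v\<^sup>2 / (W + 2)"
  proof -
    have "(W - 2) * (W + 2) = t\<^sup>2 * v\<^sup>2"
      using W2 by (simp add: power2_eq_square field_simps)
    then show ?thesis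
      using pos by (simp add: field_simps)
  qed
  then have "Y_a t v + (Y_a (- t) v)\<^sup>2 = v * B / 4"
    by (simp add: Y_a_def B_def K_def L_def W_def Q_def power2_eq_square field_simps)
  moreover have "Y_b t v = - 2 * B / (W\<^sup>2 * Q ^ 3)"
    by (simp add: Y_b_def B_def K_def L_def W_def Q_def Let_def)
  ultimately show ?thesis
    using pos unfolding Y_a_mult_Y_a_minus by (simp add: W_def Q_def field_simps)
qed

lemma Y_a_at_0: "Y_a t 0 = -1"
  by (simp add: Y_a_def rho_def)

lemma Y_b_at_0: "Y_b t 0 = (4 - 3 * t) / 8"
  by (simp add: Y_b_def kappa_def rho_def Let_def field_simps)

lemma prod_sum_swap_Y: "prod_sum_swap (Y_a t v) (Y_b t v) (Y_a (- t) v) (Y_b (- t) v)"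
proof (cases "v = 0")
  case True
  then show ?thesis
    by (simp add: prod_sum_swap_def Y_a_at_0 Y_b_at_0 field_simps)
next
  case False
  define a c where "a = Y_a t v" and "c = Y_a (- t) v"
  have "a * c - 1 \<noteq> 0"
    using False rho_pos[of "t * v"] kappa_pos[of v]
    unfolding a_def c_def Y_a_mult_Y_a_minus by simp
  moreover have "Y_b t v * (a * c - 1) = a + c\<^sup>2" "Y_b (- t) v * (a * c - 1) = c + a\<^sup>2"
    using Y_b_mult[of t v] Y_b_mult[of "- t" v] by (simp_all add: a_def c_def mult.commute)
  ultimately have "Y_b t v = b_of a c" "Y_b (- t) v = d_of a c"
    by (simp_all add: b_of_def d_of_def eq_divide_eq)
  then show ?thesis
    using \<open>a * c - 1 \<noteq> 0\<close> prod_sum_swap_b_of_d_of[of a c] by (simp add: a_def c_def)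
qed

lemma Y_a_sub_Y_a_minus: "Y_a t v - Y_a (- t) v = t * v"
  by (simp add: Y_a_def field_simps)

lemma Y_a_add_Y_a_minus: "Y_a t v + Y_a (- t) v = rho (t * v) * (v * kappa v - 1)"
  by (simp add: Y_a_def field_simps)

definition Y_chart :: "real \<times> real \<Rightarrow> real \<times> real \<times> real \<times> real" where
  "Y_chart p = unshift (Y_a (fst p) (snd p)) (Y_b (fst p) (snd p))
    (Y_a (- fst p) (snd p)) (Y_b (- fst p) (snd p))"

definition Y_v :: "real \<Rightarrow> real \<Rightarrow> real" where
  "Y_v a c = mult_kappa_inv (1 + (a + c) / rho (a - c))"

definition Y_t :: "real \<Rightarrow> real \<Rightarrow> real \<Rightarrow> real" where
  "Y_t a b c = (if Y_v a c = 0 then (4 - 8 * b) / 3 else (a - c) / Y_v a c)"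

definition Y_chart_inv :: "real \<times> real \<times> real \<times> real \<Rightarrow> real \<times> real" where
  "Y_chart_inv q = (Y_t (coord_a q) (coord_b q) (coord_c q), Y_v (coord_a q) (coord_c q))"

lemma Y_chart_mem_surface_Y: "Y_chart p \<in> surface_Y"
proof -
  have "rho (t * v) * (v * kappa v - 1) < rho (t * v)" for t v
    using rho_pos[of "t * v"] mult_kappa_less_2[of v] by simp
  then show ?thesis
    using prod_sum_swap_Y
    by (simp add: Y_chart_def surface_Y_def Y_region_def unshift_mem_surface_iff Y_a_sub_Y_a_minus
        Y_a_add_Y_a_minus)
qed

lemma Y_v_Y_a: "Y_v (Y_a t v) (Y_a (- t) v) = v"
  using rho_pos[of "t * v"]
  by (simp add: Y_v_def Y_a_sub_Y_a_minus Y_a_add_Y_a_minus mult_kappa_inv_mult_kappa)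

lemma Y_chart_inv_Y_chart: "Y_chart_inv (Y_chart p) = p"
proof -
  obtain t v where p: "p = (t, v)"
    by fastforce
  have "Y_t (Y_a t v) (Y_b t v) (Y_a (- t) v) = t"
    by (cases "v = 0") (simp_all add: Y_t_def Y_v_Y_a Y_a_sub_Y_a_minus Y_b_at_0 field_simps)
  then show ?thesis
    by (simp add: p Y_chart_inv_def Y_chart_def Y_v_Y_a)
qed

lemma Y_v_mult_kappa:
  assumes "a + c < rho (a - c)"
  shows "Y_v a c * kappa (Y_v a c) = 1 + (a + c) / rho (a - c)"
proof -
  have "1 + (a + c) / rho (a - c) < 2"
    using assms rho_pos[of "a - c"] by (simp add: field_simps)
  then show ?thesis
    unfolding Y_v_def by (rule mult_kappa_mult_kappa_inv)
qed

lemma Y_v_eq_0_imp_eq_minus_1: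
  assumes "prod_sum_swap a b c d" "a + c < rho (a - c)" "Y_v a c = 0"
  shows "a = -1 \<and> c = -1"
proof -
  have "a + c = - rho (a - c)"
    using Y_v_mult_kappa[OF assms(2)] assms(3) rho_pos[of "a - c"] by (simp add: field_simps)
  then have "a * c = 1"
    using add_sq_sub_rho_sq[of a c] by simp
  then have a: "a = - c\<^sup>2"
    using prod_sum_swap_b[OF assms(1)] by simp
  then have "(c + 1) * ((c - 1 / 2)\<^sup>2 + 3 / 4) = 0"
    using \<open>a * c = 1\<close> by (simp add: power2_eq_square algebra_simps)
  moreover have "0 < (c - 1 / 2)\<^sup>2 + 3 / 4"
    by (simp add: add_nonneg_pos)
  ultimately have "c = -1"
    by simp
  with a show ?thesis
    by simp
qed

lemma Y_chart_inv_coords: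
  assumes "prod_sum_swap a b c d" "a + c < rho (a - c)"
  defines "t \<equiv> Y_t a b c" and "v \<equiv> Y_v a c"
  shows "Y_a t v = a \<and> Y_b t v = b \<and> Y_a (- t) v = c \<and> Y_b (- t) v = d"
proof (cases "v = 0")
  case True
  then have "a = -1" "c = -1"
    using Y_v_eq_0_imp_eq_minus_1[OF assms(1,2)] by (simp_all add: v_def)
  moreover have "d = 1 - b"
    using assms(1) \<open>a = -1\<close> \<open>c = -1\<close> by (simp add: prod_sum_swap_def)
  ultimately show ?thesis
    using True by (simp add: t_def Y_t_def v_def Y_a_at_0 Y_b_at_0 field_simps)
next
  case False
  have tv: "t * v = a - c"
    using False by (simp add: t_def Y_t_def v_def)
  have "Y_a t v + Y_a (- t) v = a + c"
    using Y_v_mult_kappa[OF assms(2), folded v_def] rho_pos[of "a - c"]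
    by (simp add: Y_a_add_Y_a_minus tv field_simps)
  then have ac: "Y_a t v = a" "Y_a (- t) v = c"
    using Y_a_sub_Y_a_minus[of t v] tv by linarith+
  have "a * c - 1 \<noteq> 0"
    using Y_a_mult_Y_a_minus[of t v] False rho_pos[of "t * v"] kappa_pos[of v] ac by simp
  moreover have "Y_b t v * (a * c - 1) = b * (a * c - 1)"
    "Y_b (- t) v * (a * c - 1) = d * (a * c - 1)"
    using Y_b_mult[of t v] Y_b_mult[of "- t" v] prod_sum_swap_b[OF assms(1)]
      prod_sum_swap_d[OF assms(1)] ac by (simp_all add: mult.commute)
  ultimately show ?thesis
    using ac by simp
qed

lemma Y_chart_Y_chart_inv:
  assumes "q \<in> surface_Y"
  shows "Y_chart (Y_chart_inv q) = q"
  using assms Y_chart_inv_coords[of "coord_a q" "coord_b q" "coord_c q" "coord_d q"]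
  by (simp add: surface_Y_def Y_region_def mem_surface_iff Y_chart_def Y_chart_inv_def
      unshift_coords)

lemma Cinf_on_Y_a_Y_b:
  assumes "Cinf_on U T" "Cinf_on U V"
  shows "Cinf_on U (\<lambda>x. Y_a (T x) (V x))" "Cinf_on U (\<lambda>x. Y_b (T x) (V x))"
proof -
  have "\<forall>x\<in>U. rho (T x * V x) + 2 \<noteq> 0" "\<forall>x\<in>U. (rho (T x * V x))\<^sup>2 * (kappa (V x)) ^ 3 \<noteq> 0"
    using rho_pos kappa_pos by (auto simp: add_pos_pos less_imp_neq[symmetric])
  with assms show "Cinf_on U (\<lambda>x. Y_a (T x) (V x))" "Cinf_on U (\<lambda>x. Y_b (T x) (V x))"
    unfolding Y_a_def Y_b_def Let_def
    by (intro Cinf_on_intros Cinf_on_divide Cinf_on_rho Cinf_on_kappa; simp)+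
qed

lemma Cinf_on_Y_chart: "Cinf_on U P \<Longrightarrow> Cinf_on U (\<lambda>x. Y_chart (P x))"
  unfolding Y_chart_def by (intro Cinf_on_unshift Cinf_on_Y_a_Y_b Cinf_on_intros)

lemma prod_sum_swap_diff_eq:
  assumes "prod_sum_swap a b c d"
  shows "(a - c) * ((a + c - 1) * (1 - c)) = (a * c - 1) * (b * (a + c - 2) - (a + c))"
proof -
  have "b * (a * c - 1) * (a + c - 2) = (a + c\<^sup>2) * (a + c - 2)"
    using prod_sum_swap_b[OF assms] by simp
  then show ?thesis
    by (simp add: power2_eq_square algebra_simps)
qed

text \<open>Near \<open>v = 0\<close> the coordinate \<open>t = (a - c) / v\<close> is recovered without dividing by \<open>v\<close>:
  combine \<open>prod_sum_swap_diff_eq\<close> with \<open>a c - 1 = - W\<^sup>2 v kappa\<^sup>3 / 8\<close>.\<close>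

definition Y_t_near_0 :: "real \<Rightarrow> real \<Rightarrow> real \<Rightarrow> real" where
  "Y_t_near_0 a b c =
    - ((rho (a - c))\<^sup>2 * (kappa (Y_v a c)) ^ 3 * (b * (a + c - 2) - (a + c)))
      / (8 * ((a + c - 1) * (1 - c)))"

lemma Y_t_near_0_eq_Y_t:
  assumes "prod_sum_swap a b c d" "a + c < rho (a - c)" "(a + c - 1) * (1 - c) \<noteq> 0"
  shows "Y_t_near_0 a b c = Y_t a b c"
proof (cases "Y_v a c = 0")
  case True
  then have "a = -1" "c = -1"
    using Y_v_eq_0_imp_eq_minus_1[OF assms(1,2)] by simp_all
  with True show ?thesis
    by (simp add: Y_t_near_0_def Y_t_def kappa_def rho_def field_simps)
next
  case False
  define t v where "t = Y_t a b c" and "v = Y_v a c"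
  have "Y_a t v = a" "Y_a (- t) v = c"
    using Y_chart_inv_coords[OF assms(1,2)] by (simp_all add: t_def v_def)
  have tv: "t * v = a - c"
    using False by (simp add: t_def v_def Y_t_def)
  define N D where "N = b * (a + c - 2) - (a + c)" and "D = (a + c - 1) * (1 - c)"
  have "v * (t * (8 * D)) = 8 * ((t * v) * D)"
    by (simp add: algebra_simps)
  also have "t * v = a - c"
    by (fact tv)
  also have "(a - c) * D = (a * c - 1) * N"
    using prod_sum_swap_diff_eq[OF assms(1)] by (simp add: N_def D_def)
  also have "a * c - 1 = - ((rho (a - c))\<^sup>2 * v * (kappa v) ^ 3) / 8"
    using Y_a_mult_Y_a_minus[of t v] \<open>Y_a t v = a\<close> \<open>Y_a (- t) v = c\<close> tv by simp
  finally have "v * (t * (8 * D)) = v * (- ((rho (a - c))\<^sup>2 * (kappa v) ^ 3 * N))"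
    by (simp add: algebra_simps)
  then have "t * (8 * D) = - ((rho (a - c))\<^sup>2 * (kappa v) ^ 3 * N)"
    using mult_left_cancel[OF False[folded v_def]] by blast
  then have "t = - ((rho (a - c))\<^sup>2 * (kappa v) ^ 3 * N) / (8 * D)"
    using assms(3) by (simp add: D_def field_simps)
  then show ?thesis
    by (simp add: Y_t_near_0_def t_def v_def N_def D_def)
qed

lemma Cinf_on_Y_v: "Cinf_on Y_region (\<lambda>q. Y_v (coord_a q) (coord_c q))"
  unfolding Y_v_def
  by (intro Cinf_on_mult_kappa_inv Cinf_on_intros Cinf_on_divide Cinf_on_rho Cinf_on_coords)
    (auto simp: Y_region_def field_simps rho_pos less_imp_neq[OF rho_pos, symmetric])

lemma Y_chart_inv_locally_Cinf_if_Y_v_neq_0: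
  assumes "q \<in> surface_Y" "Y_v (coord_a q) (coord_c q) \<noteq> 0"
  shows "\<exists>U F. open U \<and> q \<in> U \<and> Cinf_on U F
    \<and> (\<forall>y\<in>U \<inter> surface_Y. F y = plane_to_ball (Y_chart_inv y))"
proof (intro exI conjI)
  let ?V = "\<lambda>q. Y_v (coord_a q) (coord_c q)"
  show "open (Y_region \<inter> ?V -` (- {0}))"
    by (intro continuous_open_preimage Cinf_on_imp_continuous_on Cinf_on_Y_v open_Y_region) auto
  show "Cinf_on (Y_region \<inter> ?V -` (- {0})) (\<lambda>q. plane_to_ball ((coord_a q - coord_c q) / ?V q, ?V q))"
    by (intro Cinf_on_plane_to_ball Cinf_on_subset[OF Cinf_on_Y_v] Cinf_on_intros Cinf_on_divide
        Cinf_on_coords) auto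
  show "\<forall>y\<in>Y_region \<inter> ?V -` (- {0}) \<inter> surface_Y.
      plane_to_ball ((coord_a y - coord_c y) / ?V y, ?V y) = plane_to_ball (Y_chart_inv y)"
    by (simp add: Y_chart_inv_def Y_t_def)
qed (use assms in \<open>simp add: surface_Y_def\<close>)

lemma Y_chart_inv_locally_Cinf_if_Y_v_eq_0:
  assumes "q \<in> surface_Y" "Y_v (coord_a q) (coord_c q) = 0"
  shows "\<exists>U F. open U \<and> q \<in> U \<and> Cinf_on U F
    \<and> (\<forall>y\<in>U \<inter> surface_Y. F y = plane_to_ball (Y_chart_inv y))"
proof (intro exI conjI)
  define N where "N q = (coord_a q + coord_c q - 1) * (1 - coord_c q)" for q
  show "open (Y_region \<inter> N -` (- {0}))"
    unfolding N_def
    by (intro continuous_open_preimage open_Y_region Cinf_on_imp_continuous_on Cinf_on_intros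
        Cinf_on_coords) auto
  have "coord_a q = -1 \<and> coord_c q = -1"
    using Y_v_eq_0_imp_eq_minus_1[of "coord_a q" "coord_b q" "coord_c q" "coord_d q"] assms
    by (simp add: surface_Y_def Y_region_def mem_surface_iff)
  then show "q \<in> Y_region \<inter> N -` (- {0})"
    using assms(1) by (simp add: N_def surface_Y_def)
  show "Cinf_on (Y_region \<inter> N -` (- {0}))
      (\<lambda>q. plane_to_ball (Y_t_near_0 (coord_a q) (coord_b q) (coord_c q), Y_v (coord_a q) (coord_c q)))"
    unfolding Y_t_near_0_def
    by (intro Cinf_on_plane_to_ball Cinf_on_subset[OF Cinf_on_Y_v] Cinf_on_intros Cinf_on_divide
        Cinf_on_rho Cinf_on_kappa Cinf_on_coords) (auto simp: N_def)
  have "Y_t_near_0 (coord_a y) (coord_b y) (coord_c y) = Y_t (coord_a y) (coord_b y) (coord_c y)"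
    if "y \<in> Y_region \<inter> N -` (- {0}) \<inter> surface_Y" for y
    using that by (intro Y_t_near_0_eq_Y_t[of _ _ _ "coord_d y"])
      (auto simp: N_def surface_Y_def Y_region_def mem_surface_iff)
  then show "\<forall>y\<in>Y_region \<inter> N -` (- {0}) \<inter> surface_Y.
      plane_to_ball (Y_t_near_0 (coord_a y) (coord_b y) (coord_c y), Y_v (coord_a y) (coord_c y))
      = plane_to_ball (Y_chart_inv y)"
    by (simp add: Y_chart_inv_def)
qed

lemma smooth_map_Y_chart_inv: "smooth_map surface_Y (\<lambda>q. plane_to_ball (Y_chart_inv q))"
proof (rule smooth_mapI_Cinf_on)
  fix q assume q: "q \<in> surface_Y"
  show "\<exists>U F. open U \<and> q \<in> U \<and> Cinf_on U F
      \<and> (\<forall>y\<in>U \<inter> surface_Y. F y = plane_to_ball (Y_chart_inv y))"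
    using q Y_chart_inv_locally_Cinf_if_Y_v_eq_0 Y_chart_inv_locally_Cinf_if_Y_v_neq_0
    by (cases "Y_v (coord_a q) (coord_c q) = 0") simp_all
qed

lemma diffeomorphic_ball_surface_Y: "diffeomorphic_sets (ball (0 :: real \<times> real) 1) surface_Y"
  unfolding diffeomorphic_sets_def
  by (intro exI[of _ "\<lambda>y. Y_chart (ball_to_plane y)"]
      diffeo_betw_ball_if_global_chart[where chart_inv = Y_chart_inv]
      Y_chart_mem_surface_Y Y_chart_inv_Y_chart Y_chart_Y_chart_inv Cinf_on_Y_chart
      Cinf_on_ball_to_plane smooth_map_Y_chart_inv)

lemma components_surface: "components surface = {surface_X, surface_Y}"
  unfolding surface_eq_Un
proof (rule components_open_partition)
  show "connected surface_X" "connected surface_Y"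
    using diffeomorphic_ball_surface_X diffeomorphic_ball_surface_Y
    by (simp_all add: connected_if_diffeomorphic_sets)
  show "surface_X \<noteq> {}" "surface_Y \<noteq> {}"
    using X_chart_mem_surface_X Y_chart_mem_surface_Y by blast+
  show "openin (top_of_set (surface_X \<union> surface_Y)) surface_X"
    "openin (top_of_set (surface_X \<union> surface_Y)) surface_Y"
    using openin_surface_X openin_surface_Y by (simp_all flip: surface_eq_Un)
qed (rule surface_X_Int_surface_Y)

lemma smooth_surface_surface: "smooth_surface surface"
  unfolding smooth_surface_def
proof
  fix p assume "p \<in> surface"
  then consider "p \<in> surface_X" | "p \<in> surface_Y"
    using surface_eq_Un by blast
  then show "\<exists>W (U :: (real \<times> real) set). openin (top_of_set surface) W \<and> p \<in> W \<and> open U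
      \<and> diffeomorphic_sets U W"
    using openin_surface_X openin_surface_Y diffeomorphic_ball_surface_X
      diffeomorphic_ball_surface_Y open_ball by cases auto
qed

theorem lemma3p2:
  fixes S :: "(real \<times> real \<times> real \<times> real) set"
  defines "S \<equiv> {(w, x, y, z). w + x + y + z = 3 + w * y \<and> w * y = z * x}"
  shows "smooth_surface S
    \<and> card (components S) = 2
    \<and> (\<forall>C\<in>components S. diffeomorphic_sets (ball (0 :: real \<times> real) 1) C)
    \<and> (\<exists>X\<in>components S.
          (3, 3, 3, 3) \<in> X
        \<and> X = {(w, x, y, z) \<in> S. x > 1 \<and> z > 1}
        \<and> X = {(w, x, y, z) \<in> S. y > 1 \<and> w > 1})"
proof -
  have S: "S = surface"
    by (simp add: S_def surface_def)
  have "surface_X \<noteq> surface_Y"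
    using surface_X_Int_surface_Y X_chart_mem_surface_X by blast
  then have "card (components S) = 2"
    by (simp add: S components_surface)
  moreover have "(3, 3, 3, 3) \<in> surface_X"
    by (simp add: surface_X_eq_pos_cd surface_def coord_c_def coord_d_def)
  moreover have "surface_X = {(w, x, y, z) \<in> S. x > 1 \<and> z > 1}"
    unfolding surface_X_eq_pos_cd S by (auto simp: coord_c_def coord_d_def)
  moreover have "surface_X = {(w, x, y, z) \<in> S. y > 1 \<and> w > 1}"
    unfolding surface_X_eq_pos_ab S by (auto simp: coord_a_def coord_b_def)
  ultimately show ?thesis
    using smooth_surface_surface diffeomorphic_ball_surface_X diffeomorphic_ball_surface_Y
    unfolding S components_surface by blast
qed

end
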